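(* Let $X_1, X_2, \ldots$ be independent random variables, each uniformly distributed on $[-1,1]$, and fix $\varepsilon > 0$. For $t \ge 0$ and $z \in \mathbb{R}$, let $f_t(z) = 1$ if there exists $S \subseteq \{1,\dots,t\}$ with $\lvert z - \sum_{i \in S} X_i \rvert < \varepsilon$, and $f_t(z) = 0$ otherwise; let $v_t = \frac{1}{2}\int_{-1}^{1} f_t(z)\,\mathrm{d}z$, let $\tau_1 = \min\{t \ge 0 : v_t > 1/2\}$, for $t \ge 0$ let $w_t = 1 - v_{\tau_1 + t}$, and let $\tau_2 = \min\{t \ge 0 : w_t \le \varepsilon/2\}$. Then for all $t > 0$, $$\Pr[\tau_2 \le t] \ge 1 - \frac{1}{\varepsilon}\left(\frac{7}{8}\right)^t.$$
   Context: $f_t$ is the indicator that $z$ can be approximated to within error strictly less than $\varepsilon$ by a subset sum of the first $t$ variables (the empty sum being $0$); $v_t$ is the fraction of $[-1,1]$ so approximated; $\tau_1$ is the first time this fraction exceeds $1/2$; $w_t$ is the non-approximated fraction $t$ steps after $\tau_1$; $\tau_2$ is the number of steps after $\tau_1$ until the non-approximated fraction is at most $\varepsilon/2$. *)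

theory Defs
  imports "HOL-Probability.Probability"
begin

definition approx_by :: "real \<Rightarrow> (nat \<Rightarrow> 'a \<Rightarrow> real) \<Rightarrow> nat \<Rightarrow> real \<Rightarrow> 'a \<Rightarrow> bool" where
  "approx_by eps X t z \<omega> \<longleftrightarrow> (\<exists>S \<subseteq> {1..t}. \<bar>z - (\<Sum>i\<in>S. X i \<omega>)\<bar> < eps)"

definition vfrac :: "real \<Rightarrow> (nat \<Rightarrow> 'a \<Rightarrow> real) \<Rightarrow> nat \<Rightarrow> 'a \<Rightarrow> real" where
  "vfrac eps X t \<omega> = (1/2) * (LBINT z=-1..1. (if approx_by eps X t z \<omega> then 1 else 0))"

definition tau1 :: "real \<Rightarrow> (nat \<Rightarrow> 'a \<Rightarrow> real) \<Rightarrow> 'a \<Rightarrow> enat" where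
  "tau1 eps X \<omega> = (if \<exists>t. vfrac eps X t \<omega> > 1/2
      then enat (LEAST t. vfrac eps X t \<omega> > 1/2) else \<infinity>)"

text \<open>w_t = 1 - v_{tau_1 + t} (only meaningful when tau_1 is finite).\<close>
definition wfrac :: "real \<Rightarrow> (nat \<Rightarrow> 'a \<Rightarrow> real) \<Rightarrow> nat \<Rightarrow> 'a \<Rightarrow> real" where
  "wfrac eps X t \<omega> = 1 - vfrac eps X (the_enat (tau1 eps X \<omega>) + t) \<omega>"

definition tau2 :: "real \<Rightarrow> (nat \<Rightarrow> 'a \<Rightarrow> real) \<Rightarrow> 'a \<Rightarrow> enat" where
  "tau2 eps X \<omega> = (if tau1 eps X \<omega> \<noteq> \<infinity> \<and> (\<exists>t. wfrac eps X t \<omega> \<le> eps/2)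
      then enat (LEAST t. wfrac eps X t \<omega> \<le> eps/2) else \<infinity>)"

end

theory Submission
  imports Defs
begin

text \<open>
  Write u_t = 1 - v_t for the uncovered fraction and A_t for the set of points approximated after
  t steps, so that A_(t+1) is the union of A_t and its translate by X_(t+1). By Fubini, the expected
  uncovered fraction after one more step is a quarter of the integral, over the uncovered points z
  of (-1,1), of the measure of the shifts x in [-1,1] with z - x not in A_t. That measure is at most
  |z| + 2 u_t, and the integral of |z| over a subset of [-1,1] of measure b is at most b - b^2/4;
  together this gives a contraction by the factor 7/8 once u_t <= 1/2, that is from time tau_1 on.
  Since (-eps, eps) is always covered, there is also a contraction by 1 - min eps 1 / 2 at every
  step, which makes tau_1 finite almost surely. On the event tau_1 = k we have u_k <= 1/2, hence
  E[u_(k+t); tau_1 = k] <= (7/8)^t P(tau_1 = k) / 2, and Markov's inequality bounds the probability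
  of u_(k+t) > eps/2 on this event by (7/8)^t P(tau_1 = k) / eps. Summing over k gives the claim.
\<close>

section \<open>Covering an interval by a set and a translate of it\<close>

lemma vimage_minus_left_borel [measurable]:
  "B \<in> sets borel \<Longrightarrow> (\<lambda>x. z - x) -` B \<in> sets (borel :: real measure)"
  by (rule measurable_sets_borel) auto

lemma emeasure_lborel_reflect:
  assumes [measurable]: "B \<in> sets borel"
  shows "emeasure lborel ((\<lambda>x. z - x) -` B) = emeasure lborel (B :: real set)"
proof -
  have "emeasure lborel B = (\<integral>\<^sup>+x. indicator B x \<partial>lborel)"
    by simp
  also have "\<dots> = (\<integral>\<^sup>+x. indicator B (z + (-1) * x) \<partial>lborel)"
    by (subst nn_integral_real_affine[of _ "-1" z]) auto
  also have "\<dots> = (\<integral>\<^sup>+x. indicator ((\<lambda>x. z - x) -` B) x \<partial>lborel)"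
    by (intro nn_integral_cong) (simp add: indicator_def)
  also have "\<dots> = emeasure lborel ((\<lambda>x. z - x) -` B)"
    by (intro nn_integral_indicator) simp
  finally show ?thesis ..
qed

definition uncovered_frac :: "real set \<Rightarrow> real" where
  "uncovered_frac A = measure lborel ({-1<..<1} - A) / 2"

lemma emeasure_Ioo_Diff:
  assumes "A \<in> sets borel"
  shows "emeasure lborel ({-1<..<1} - A) = ennreal (2 * uncovered_frac A)"
proof -
  have "emeasure lborel ({-1<..<1} - A) \<le> emeasure lborel {-1<..<1::real}"
    using assms by (intro emeasure_mono) auto
  then have "emeasure lborel ({-1<..<1} - A) \<noteq> \<infinity>"
    by (auto simp: top_unique)
  then show ?thesis
    unfolding uncovered_frac_def by (simp add: emeasure_eq_ennreal_measure)
qed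

lemma uncovered_frac_nonneg: "0 \<le> uncovered_frac A"
  unfolding uncovered_frac_def by simp

lemma uncovered_frac_le_1:
  assumes "A \<in> sets borel"
  shows "uncovered_frac A \<le> 1"
proof -
  have "measure lborel ({-1<..<1} - A) \<le> measure lborel {-1<..<1::real}"
    using assms by (intro measure_mono_fmeasurable) (auto simp: fmeasurable_def)
  then show ?thesis unfolding uncovered_frac_def by simp
qed

lemma uncovered_frac_antimono:
  assumes "A \<subseteq> B" "A \<in> sets borel" "B \<in> sets borel"
  shows "uncovered_frac B \<le> uncovered_frac A"
  unfolding uncovered_frac_def using assms
  by (intro divide_right_mono measure_mono_fmeasurable fmeasurable_Diff) (auto simp: fmeasurable_def)

definition translate_union :: "real set \<Rightarrow> real \<Rightarrow> real set" where
  "translate_union A x = A \<union> (\<lambda>z. z - x) -` A"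

lemma translate_union_borel [measurable]:
  assumes [measurable]: "A \<in> sets borel"
  shows "translate_union A x \<in> sets borel"
  unfolding translate_union_def by (intro sets.Un measurable_sets_borel[OF _ assms]) auto

definition uncovering_shifts :: "real set \<Rightarrow> real \<Rightarrow> real set" where
  "uncovering_shifts A z = {x \<in> {-1..1}. z - x \<notin> A}"

lemma ennreal_uncovered_frac_translate_union:
  assumes [measurable]: "A \<in> sets borel"
  shows "ennreal (uncovered_frac (translate_union A x))
    = (\<integral>\<^sup>+z. indicator ({-1<..<1} - A) z * indicator (- A) (z - x) \<partial>lborel) / 2"
proof -
  have "(\<integral>\<^sup>+z. indicator ({-1<..<1} - A) z * indicator (- A) (z - x) \<partial>lborel)
      = (\<integral>\<^sup>+z. indicator ({-1<..<1} - translate_union A x) z \<partial>lborel)"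
    unfolding translate_union_def by (intro nn_integral_cong) (auto simp: indicator_def)
  also have "\<dots> = ennreal (uncovered_frac (translate_union A x)) * 2"
    by (simp add: emeasure_Ioo_Diff ennreal_mult uncovered_frac_nonneg mult.commute)
  finally show ?thesis
    by (simp add: ennreal_mult_divide_eq)
qed

lemma nn_integral_uncovered_frac_translate_union:
  assumes [measurable]: "A \<in> sets borel"
  shows "(\<integral>\<^sup>+x. uncovered_frac (translate_union A x) \<partial>uniform_measure lborel {-1..1})
    = (\<integral>\<^sup>+z\<in>{-1<..<1} - A. emeasure lborel (uncovering_shifts A z) \<partial>lborel) / 4"
proof -
  define h :: "real \<Rightarrow> real \<Rightarrow> ennreal"
    where "h x z = indicator ({-1<..<1} - A) z * indicator (- A) (z - x)" for x z
  have h_measurable [measurable]: "case_prod h \<in> borel_measurable (lborel \<Otimes>\<^sub>M lborel)"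
    unfolding h_def by measurable
  have inner_x: "ennreal (uncovered_frac (translate_union A x)) = (\<integral>\<^sup>+z. h x z \<partial>lborel) / 2" for x
    unfolding h_def by (rule ennreal_uncovered_frac_translate_union[OF assms])
  have inner_z: "(\<integral>\<^sup>+x. indicator {-1..1} x * h x z \<partial>lborel)
      = indicator ({-1<..<1} - A) z * emeasure lborel (uncovering_shifts A z)" for z
  proof -
    have "(\<integral>\<^sup>+x. indicator {-1..1} x * h x z \<partial>lborel)
        = (\<integral>\<^sup>+x. indicator ({-1<..<1} - A) z * indicator (uncovering_shifts A z) x \<partial>lborel)"
      unfolding h_def uncovering_shifts_def by (intro nn_integral_cong) (auto simp: indicator_def)
    also have "\<dots> = indicator ({-1<..<1} - A) z * emeasure lborel (uncovering_shifts A z)"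
      unfolding uncovering_shifts_def by (rule nn_integral_cmult_indicator) measurable
    finally show ?thesis .
  qed
  have "(\<integral>\<^sup>+x. uncovered_frac (translate_union A x) \<partial>uniform_measure lborel {-1..1})
      = (\<integral>\<^sup>+x\<in>{-1..1}. (\<integral>\<^sup>+z. h x z \<partial>lborel) / 2 \<partial>lborel) / 2"
    unfolding inner_x
    by (subst nn_integral_uniform_measure) (auto intro: lborel.borel_measurable_nn_integral)
  also have "(\<integral>\<^sup>+x\<in>{-1..1}. (\<integral>\<^sup>+z. h x z \<partial>lborel) / 2 \<partial>lborel)
      = (\<integral>\<^sup>+x. (\<integral>\<^sup>+z. indicator {-1..1} x * h x z \<partial>lborel) / 2 \<partial>lborel)"
    by (intro nn_integral_cong) (auto simp: indicator_def)
  also have "\<dots> = (\<integral>\<^sup>+x. \<integral>\<^sup>+z. indicator {-1..1} x * h x z \<partial>lborel \<partial>lborel) / 2"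
    by (intro nn_integral_divide lborel.borel_measurable_nn_integral) measurable
  also have "(\<integral>\<^sup>+x. \<integral>\<^sup>+z. indicator {-1..1} x * h x z \<partial>lborel \<partial>lborel)
      = (\<integral>\<^sup>+z. \<integral>\<^sup>+x. indicator {-1..1} x * h x z \<partial>lborel \<partial>lborel)"
    by (intro lborel_pair.Fubini') measurable
  also have "\<dots> = (\<integral>\<^sup>+z\<in>{-1<..<1} - A. emeasure lborel (uncovering_shifts A z) \<partial>lborel)"
    unfolding inner_z by (simp add: mult.commute)
  finally show ?thesis
    by (simp add: divide_ennreal_def mult.assoc ennreal_inverse_mult[symmetric])
qed

lemma emeasure_uncovering_shifts_le_abs:
  assumes [measurable]: "A \<in> sets borel" and z: "z \<in> {-1<..<1}"
  shows "emeasure lborel (uncovering_shifts A z) \<le> ennreal (\<bar>z\<bar> + 2 * uncovered_frac A)"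
proof -
  have "uncovering_shifts A z \<subseteq> ({-1..z-1} \<union> {z+1..1}) \<union> (\<lambda>x. z - x) -` ({-1<..<1} - A)"
    unfolding uncovering_shifts_def by auto
  then have "emeasure lborel (uncovering_shifts A z)
      \<le> emeasure lborel (({-1..z-1} \<union> {z+1..1}) \<union> (\<lambda>x. z - x) -` ({-1<..<1} - A))"
    by (intro emeasure_mono) auto
  also have "\<dots> \<le> emeasure lborel {-1..z-1} + emeasure lborel {z+1..1}
      + emeasure lborel ((\<lambda>x. z - x) -` ({-1<..<1} - A))"
    by (intro emeasure_subadditive[THEN order_trans] add_right_mono emeasure_subadditive) auto
  also have "\<dots> = ennreal \<bar>z\<bar> + ennreal (2 * uncovered_frac A)"
    using z by (auto simp: emeasure_lborel_reflect emeasure_Ioo_Diff emeasure_lborel_Icc_eq)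
  finally show ?thesis
    by (simp add: ennreal_plus uncovered_frac_nonneg)
qed

lemma emeasure_uncovering_shifts_le:
  assumes [measurable]: "A \<in> sets borel" and z: "z \<in> {-1<..<1}"
    and e: "0 < e" "e \<le> 1" and centre: "{-e<..<e} \<subseteq> A"
  shows "emeasure lborel (uncovering_shifts A z) \<le> ennreal (2 - e)"
proof -
  obtain a where a: "{a<..<a+e} \<subseteq> {-1..1}" and covers: "\<And>x. x \<in> {a<..<a+e} \<Longrightarrow> z - x \<in> A"
  proof (cases "z \<ge> 0")
    case True
    then show ?thesis
      using z e centre by (intro that[of "z - e"]) (auto simp: subset_eq)
  next
    case False
    then show ?thesis
      using z e centre by (intro that[of z]) (auto simp: subset_eq)
  qed
  have "uncovering_shifts A z \<subseteq> {-1..1} - {a<..<a+e}"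
    using covers unfolding uncovering_shifts_def by auto
  then have "emeasure lborel (uncovering_shifts A z) \<le> emeasure lborel ({-1..1} - {a<..<a+e})"
    by (intro emeasure_mono) auto
  also have "\<dots> = ennreal (2 - e)"
    using a e by (subst emeasure_Diff) (auto simp: ennreal_minus[symmetric])
  finally show ?thesis .
qed

lemma nn_integral_ramps:
  assumes "0 \<le> c" "c \<le> 1"
  shows "(\<integral>\<^sup>+z. ennreal (indicator {c..1} z * (z - c)) + ennreal (indicator {c..1} (-z) * (-z - c)) \<partial>lborel)
    = ennreal ((1 - c)^2)"
proof -
  let ?r = "\<lambda>z. ennreal (indicator {c..1} z * (z - c))"
  have "((\<lambda>z. z - c) has_integral ((1 - c)^2 / 2 - (c - c)^2 / 2)) {c..1}"
  proof (rule fundamental_theorem_of_calculus)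
    fix x assume "x \<in> {c..1}"
    have "((\<lambda>z. (z - c)^2 / 2) has_real_derivative (x - c)) (at x within {c..1})"
      by (auto intro!: derivative_eq_intros)
    then show "((\<lambda>z. (z - c)^2 / 2) has_vector_derivative (x - c)) (at x within {c..1})"
      by (simp add: has_real_derivative_iff_has_vector_derivative)
  qed (use assms in auto)
  then have ramp: "(\<integral>\<^sup>+z. ?r z \<partial>lborel) = ennreal ((1 - c)^2 / 2)"
    by (intro nn_integral_has_integral_lebesgue) auto
  have "(\<integral>\<^sup>+z. ?r (-z) \<partial>lborel) = (\<integral>\<^sup>+z. ?r z \<partial>lborel)"
    using nn_integral_real_affine[of ?r "-1" 0] by simp
  then have "(\<integral>\<^sup>+z. ?r z + ?r (-z) \<partial>lborel) = ennreal ((1 - c)^2 / 2) + ennreal ((1 - c)^2 / 2)"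
    by (simp add: nn_integral_add ramp)
  also have "\<dots> = ennreal ((1 - c)^2)"
    by (subst ennreal_plus[symmetric]) auto
  finally show ?thesis .
qed

lemma set_nn_integral_abs_le:
  assumes [measurable]: "U \<in> sets borel" and "U \<subseteq> {-1..1}"
  defines "b \<equiv> measure lborel U"
  shows "(\<integral>\<^sup>+z\<in>U. ennreal \<bar>z\<bar> \<partial>lborel) \<le> ennreal (b - b^2 / 4)"
proof -
  \<comment> \<open>Bathtub principle: on [-1,1], |z| is at most c plus the two ramps beyond -c and c,
    and the bound is sharp for U = [-1,-c] \<union> [c,1].\<close>
  define c where "c = 1 - b / 2"
  define r where "r z = indicator {c..1} z * (z - c)" for z :: real
  have "b \<le> measure lborel {-1..1::real}"
    unfolding b_def using assms by (intro measure_mono_fmeasurable) (auto simp: fmeasurable_def)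
  then have c: "0 \<le> c" "c \<le> 1"
    unfolding c_def b_def by auto
  have "emeasure lborel U \<le> emeasure lborel {-1..1::real}"
    using assms by (intro emeasure_mono) auto
  then have "emeasure lborel U \<noteq> \<infinity>"
    by (auto simp: top_unique)
  then have U_finite: "emeasure lborel U = ennreal b"
    unfolding b_def by (simp add: emeasure_eq_ennreal_measure)
  have "(\<integral>\<^sup>+z\<in>U. ennreal \<bar>z\<bar> \<partial>lborel)
      \<le> (\<integral>\<^sup>+z. ennreal c * indicator U z + (ennreal (r z) + ennreal (r (-z))) \<partial>lborel)"
  proof (intro nn_integral_mono)
    fix z
    have "0 \<le> r z" "0 \<le> r (-z)"
      unfolding r_def by (auto simp: indicator_def)
    moreover have "\<bar>z\<bar> \<le> c + r z + r (-z)" if "z \<in> U"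
      using that assms(2) c unfolding r_def by (auto simp: indicator_def)
    ultimately show "ennreal \<bar>z\<bar> * indicator U z \<le> ennreal c * indicator U z + (ennreal (r z) + ennreal (r (-z)))"
      using c by (cases "z \<in> U") (simp_all add: ennreal_plus[symmetric] add.assoc del: ennreal_plus)
  qed
  also have "\<dots> = ennreal c * ennreal b + ennreal ((1 - c)^2)"
  proof -
    have [measurable]: "r \<in> borel_measurable borel"
      unfolding r_def by measurable
    have "(\<integral>\<^sup>+z. ennreal (r z) + ennreal (r (-z)) \<partial>lborel) = ennreal ((1 - c)^2)"
      unfolding r_def using c by (rule nn_integral_ramps)
    then show ?thesis
      by (subst nn_integral_add) (auto simp: nn_integral_cmult_indicator U_finite)
  qed
  also have "\<dots> = ennreal (c * b + (1 - c)^2)"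
    using c by (simp add: ennreal_mult b_def)
  also have "c * b + (1 - c)^2 = b - b^2 / 4"
    unfolding c_def by (simp add: power2_eq_square field_simps)
  finally show ?thesis .
qed

lemma nn_integral_uncovered_frac_translate_union_le:
  assumes "A \<in> sets borel" "0 \<le> R"
    and "(\<integral>\<^sup>+z\<in>{-1<..<1} - A. emeasure lborel (uncovering_shifts A z) \<partial>lborel) \<le> ennreal R"
  shows "(\<integral>\<^sup>+x. uncovered_frac (translate_union A x) \<partial>uniform_measure lborel {-1..1}) \<le> ennreal (R / 4)"
proof -
  have "(\<integral>\<^sup>+x. uncovered_frac (translate_union A x) \<partial>uniform_measure lborel {-1..1}) \<le> ennreal R / 4"
    unfolding nn_integral_uncovered_frac_translate_union[OF assms(1)]
    using assms(3) by (rule divide_right_mono_ennreal)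
  also have "\<dots> = ennreal (R / 4)"
    using divide_ennreal[of R 4] assms(2) by simp
  finally show ?thesis .
qed

lemma nn_integral_uncovered_frac_translate_union_le_7_8:
  assumes [measurable]: "A \<in> sets borel" and half: "uncovered_frac A \<le> 1/2"
  shows "(\<integral>\<^sup>+x. uncovered_frac (translate_union A x) \<partial>uniform_measure lborel {-1..1})
    \<le> ennreal (7/8 * uncovered_frac A)"
proof -
  define b where "b = 2 * uncovered_frac A"
  have b: "0 \<le> b" "b \<le> 1"
    using half uncovered_frac_nonneg[of A] unfolding b_def by auto
  then have b_sq: "b * b \<le> b"
    by (simp add: mult_left_le_one_le)
  have b_measure: "measure lborel ({-1<..<1} - A) = b"
    unfolding b_def uncovered_frac_def by simp
  have "(\<integral>\<^sup>+z\<in>{-1<..<1} - A. emeasure lborel (uncovering_shifts A z) \<partial>lborel)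
      \<le> (\<integral>\<^sup>+z\<in>{-1<..<1} - A. ennreal \<bar>z\<bar> + ennreal b \<partial>lborel)"
    using emeasure_uncovering_shifts_le_abs[OF assms(1)] b
    by (intro nn_integral_mono) (auto simp: indicator_def b_def ennreal_plus[symmetric] uncovered_frac_nonneg
        simp del: ennreal_plus)
  also have "\<dots> = (\<integral>\<^sup>+z\<in>{-1<..<1} - A. ennreal \<bar>z\<bar> \<partial>lborel) + ennreal b * ennreal b"
    by (simp add: nn_set_integral_add nn_integral_cmult_indicator emeasure_Ioo_Diff b_def)
  also have "\<dots> \<le> ennreal (b - b^2 / 4) + ennreal (b * b)"
  proof (intro add_mono)
    have "{-1<..<1} - A \<subseteq> {-1..1}"
      by auto
    from set_nn_integral_abs_le[OF _ this]
    show "(\<integral>\<^sup>+z\<in>{-1<..<1} - A. ennreal \<bar>z\<bar> \<partial>lborel) \<le> ennreal (b - b^2 / 4)"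
      by (simp add: b_measure)
  qed (use b in \<open>simp add: ennreal_mult\<close>)
  also have "\<dots> = ennreal (b - b^2 / 4 + b * b)"
    using b b_sq by (intro ennreal_plus[symmetric]) (auto simp: power2_eq_square)
  finally have "(\<integral>\<^sup>+x. uncovered_frac (translate_union A x) \<partial>uniform_measure lborel {-1..1})
      \<le> ennreal ((b - b^2 / 4 + b * b) / 4)"
    using b b_sq by (intro nn_integral_uncovered_frac_translate_union_le) (auto simp: power2_eq_square)
  \<comment> \<open>(b + 3 b^2 / 4) / 4 \<le> 7 b / 16 holds exactly when b \<le> 1, which is where 7/8 comes from.\<close>
  also have "\<dots> \<le> ennreal (7/8 * uncovered_frac A)"
    using b_sq by (intro ennreal_leI) (simp add: b_def power2_eq_square)
  finally show ?thesis .
qed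

lemma nn_integral_uncovered_frac_translate_union_le_centred:
  assumes [measurable]: "A \<in> sets borel"
    and e: "0 < e" "e \<le> 1" and centre: "{-e<..<e} \<subseteq> A"
  shows "(\<integral>\<^sup>+x. uncovered_frac (translate_union A x) \<partial>uniform_measure lborel {-1..1})
    \<le> ennreal ((1 - e/2) * uncovered_frac A)"
proof -
  have "(\<integral>\<^sup>+z\<in>{-1<..<1} - A. emeasure lborel (uncovering_shifts A z) \<partial>lborel)
      \<le> (\<integral>\<^sup>+z. ennreal (2 - e) * indicator ({-1<..<1} - A) z \<partial>lborel)"
    using emeasure_uncovering_shifts_le[OF assms(1) _ e centre]
    by (intro nn_integral_mono) (auto simp: indicator_def)
  also have "\<dots> = ennreal ((2 - e) * (2 * uncovered_frac A))"
    using e by (simp add: nn_integral_cmult_indicator emeasure_Ioo_Diff ennreal_mult uncovered_frac_nonneg)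
  finally have "(\<integral>\<^sup>+x. uncovered_frac (translate_union A x) \<partial>uniform_measure lborel {-1..1})
      \<le> ennreal ((2 - e) * (2 * uncovered_frac A) / 4)"
    using e by (intro nn_integral_uncovered_frac_translate_union_le) (auto simp: uncovered_frac_nonneg)
  also have "(2 - e) * (2 * uncovered_frac A) / 4 = (1 - e/2) * uncovered_frac A"
    by (simp add: field_simps)
  finally show ?thesis .
qed

section \<open>Approximation by subset sums\<close>

definition approx_set :: "real \<Rightarrow> (nat \<Rightarrow> real) \<Rightarrow> nat \<Rightarrow> real set" where
  "approx_set eps y n = {z. \<exists>S\<subseteq>{1..n}. \<bar>z - (\<Sum>i\<in>S. y i)\<bar> < eps}"

lemma approx_by_iff_approx_set: "approx_by eps X t z \<omega> \<longleftrightarrow> z \<in> approx_set eps (\<lambda>i. X i \<omega>) t"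
  unfolding approx_by_def approx_set_def by simp

lemma approx_set_cong:
  assumes "\<And>i. i \<in> {1..n} \<Longrightarrow> y i = y' i"
  shows "approx_set eps y n = approx_set eps y' n"
proof -
  have "(\<Sum>i\<in>S. y i) = (\<Sum>i\<in>S. y' i)" if "S \<subseteq> {1..n}" for S
    using that assms by (intro sum.cong) auto
  then show ?thesis
    unfolding approx_set_def by (intro Collect_cong) (metis (no_types, lifting))
qed

lemma approx_set_mono: "n \<le> m \<Longrightarrow> approx_set eps y n \<subseteq> approx_set eps y m"
proof
  fix z assume "n \<le> m" "z \<in> approx_set eps y n"
  then obtain S where "S \<subseteq> {1..n}" "\<bar>z - (\<Sum>i\<in>S. y i)\<bar> < eps"
    unfolding approx_set_def by blast
  moreover have "{1..n} \<subseteq> {1..m}" using \<open>n \<le> m\<close> by auto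
  ultimately show "z \<in> approx_set eps y m" unfolding approx_set_def by blast
qed

lemma centred_interval_subset_approx_set: "{-eps<..<eps} \<subseteq> approx_set eps y n"
  unfolding approx_set_def by (auto intro!: exI[of _ "{}"])

lemma approx_set_Suc:
  "approx_set eps y (Suc n) = translate_union (approx_set eps y n) (y (Suc n))"
  unfolding translate_union_def
proof (intro equalityI subsetI)
  fix z assume "z \<in> approx_set eps y (Suc n)"
  then obtain S where S: "S \<subseteq> {1..Suc n}" "\<bar>z - (\<Sum>i\<in>S. y i)\<bar> < eps"
    unfolding approx_set_def by auto
  have fin: "finite S" using S(1) finite_subset by blast
  show "z \<in> approx_set eps y n \<union> (\<lambda>z. z - y (Suc n)) -` approx_set eps y n"
  proof (cases "Suc n \<in> S")
    case True
    then have "(\<Sum>i\<in>S. y i) = y (Suc n) + (\<Sum>i\<in>S - {Suc n}. y i)"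
      using fin by (simp add: sum.remove)
    moreover have "S - {Suc n} \<subseteq> {1..n}" using S(1) by auto
    ultimately show ?thesis
      using S(2) unfolding approx_set_def by (auto intro!: exI[of _ "S - {Suc n}"])
  next
    case False
    then have "S \<subseteq> {1..n}" using S(1) by (auto simp: le_Suc_eq)
    then show ?thesis using S(2) unfolding approx_set_def by auto
  qed
next
  fix z assume "z \<in> approx_set eps y n \<union> (\<lambda>z. z - y (Suc n)) -` approx_set eps y n"
  then consider "z \<in> approx_set eps y n" | S where "S \<subseteq> {1..n}" "\<bar>z - y (Suc n) - (\<Sum>i\<in>S. y i)\<bar> < eps"
    unfolding approx_set_def by auto
  then show "z \<in> approx_set eps y (Suc n)"
  proof cases
    case 1
    then show ?thesis using approx_set_mono[of n "Suc n"] by auto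
  next
    case (2 S)
    then have "(\<Sum>i\<in>insert (Suc n) S. y i) = y (Suc n) + (\<Sum>i\<in>S. y i)"
      by (subst sum.insert) (auto intro: finite_subset)
    then show ?thesis
      using 2 unfolding approx_set_def by (auto intro!: exI[of _ "insert (Suc n) S"] simp: algebra_simps)
  qed
qed

lemma open_approx_set: "open (approx_set eps y n)"
proof -
  have "approx_set eps y n = (\<Union>S\<in>Pow {1..n}. {z. \<bar>z - (\<Sum>i\<in>S. y i)\<bar> < eps})"
    unfolding approx_set_def by auto
  then show ?thesis by (simp add: open_UN open_Collect_less continuous_intros)
qed

lemma approx_set_borel [measurable]: "approx_set eps y n \<in> sets borel"
  by (simp add: open_approx_set)

lemma pred_mem_approx_set:
  assumes "m \<le> n"
  shows "Measurable.pred (PiM {1..n} (\<lambda>_. borel) \<Otimes>\<^sub>M borel) (\<lambda>p. snd p \<in> approx_set eps (fst p) m)"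
proof -
  have "Measurable.pred (PiM {1..n} (\<lambda>_. borel) \<Otimes>\<^sub>M borel) (\<lambda>p. \<bar>snd p - (\<Sum>i\<in>S. fst p i)\<bar> < eps)"
    if "S \<in> Pow {1..m}" for S
  proof -
    have "(\<lambda>p. fst p i) \<in> borel_measurable (PiM {1..n} (\<lambda>_. borel) \<Otimes>\<^sub>M borel)" if "i \<in> S" for i
      using that \<open>S \<in> Pow {1..m}\<close> assms
      by (intro measurable_compose[OF measurable_fst measurable_component_singleton]) auto
    then show ?thesis by measurable
  qed
  then have "Measurable.pred (PiM {1..n} (\<lambda>_. borel) \<Otimes>\<^sub>M borel)
      (\<lambda>p. \<exists>S\<in>Pow {1..m}. \<bar>snd p - (\<Sum>i\<in>S. fst p i)\<bar> < eps)"
    by (intro pred_intros_finite) auto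
  then show ?thesis unfolding approx_set_def by (simp add: Bex_def)
qed

lemma borel_measurable_uncovered_frac:
  assumes "Measurable.pred (N \<Otimes>\<^sub>M borel) (\<lambda>p. snd p \<in> S (fst p))"
  shows "(\<lambda>x. uncovered_frac (S x)) \<in> borel_measurable N"
proof -
  define Q where "Q = {p \<in> space (N \<Otimes>\<^sub>M borel). snd p \<in> {-1<..<1} \<and> snd p \<notin> S (fst p)}"
  have "Q \<in> sets (N \<Otimes>\<^sub>M borel)"
    unfolding Q_def using assms by measurable
  then have "Q \<in> sets (N \<Otimes>\<^sub>M lborel)"
    by (simp cong: sets_pair_measure_cong)
  then have "(\<lambda>x. enn2real (emeasure lborel (Pair x -` Q)) / 2) \<in> borel_measurable N"
    by (intro borel_measurable_divide borel_measurable_enn2real lborel.measurable_emeasure_Pair) simp_all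
  moreover have "enn2real (emeasure lborel (Pair x -` Q)) / 2 = uncovered_frac (S x)" if "x \<in> space N" for x
  proof -
    have "Pair x -` Q = {-1<..<1} - S x"
      using that by (auto simp: Q_def space_pair_measure)
    then show ?thesis
      unfolding uncovered_frac_def measure_def by simp
  qed
  ultimately show ?thesis
    by (simp cong: measurable_cong)
qed

lemma borel_measurable_uncovered_frac_approx_set [measurable]:
  "k \<le> n \<Longrightarrow> (\<lambda>y. uncovered_frac (approx_set eps y k)) \<in> borel_measurable (PiM {1..n} (\<lambda>_. borel))"
  by (intro borel_measurable_uncovered_frac pred_mem_approx_set)

lemma borel_measurable_uncovered_frac_translate_union:
  "(\<lambda>p. uncovered_frac (translate_union (approx_set eps (fst p) m) (snd p)))
    \<in> borel_measurable (PiM {1..m} (\<lambda>_. borel) \<Otimes>\<^sub>M borel)"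
proof (rule borel_measurable_uncovered_frac)
  let ?N = "PiM {1..m} (\<lambda>_. borel::real measure)"
  let ?P = "?N \<Otimes>\<^sub>M (borel::real measure)"
  have "(\<lambda>q. (fst (fst q), snd q)) \<in> measurable (?P \<Otimes>\<^sub>M borel) (?N \<Otimes>\<^sub>M borel)"
    "(\<lambda>q. (fst (fst q), snd q - snd (fst q))) \<in> measurable (?P \<Otimes>\<^sub>M borel) (?N \<Otimes>\<^sub>M borel)"
    by measurable
  from this[THEN measurable_compose, OF pred_mem_approx_set[OF order.refl]]
  show "Measurable.pred (?P \<Otimes>\<^sub>M borel) (\<lambda>q. snd q \<in> translate_union (approx_set eps (fst (fst q)) m) (snd (fst q)))"
    unfolding translate_union_def by simp
qed

lemma LBINT_mem_eq_uncovered_frac: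
  assumes "A \<in> sets borel"
  shows "(LBINT z=-1..1. (if z \<in> A then 1 else 0)) = 2 - 2 * uncovered_frac A"
proof -
  have "einterval (-1) 1 = {-1<..<1::real}"
    using einterval_eq_Icc[of "-1" 1] by (simp add: one_ereal_def)
  then have "(LBINT z=-1..1. (if z \<in> A then 1 else 0)) = (LBINT z. indicator ({-1<..<1} \<inter> A) z)"
    unfolding interval_lebesgue_integral_def set_lebesgue_integral_def
    by (auto simp: one_ereal_def indicator_def intro!: Bochner_Integration.integral_cong)
  also have "\<dots> = measure lborel ({-1<..<1} \<inter> A)"
    by simp
  also have "\<dots> = measure lborel {-1<..<1::real} - measure lborel ({-1<..<1} - A)"
    using assms by (subst measure_Diff[symmetric]) (auto simp: fmeasurable_def Diff_Diff_Int)
  finally show ?thesis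
    unfolding uncovered_frac_def by simp
qed

lemma vfrac_eq_uncovered_frac:
  "vfrac eps X n \<omega> = 1 - uncovered_frac (approx_set eps (\<lambda>i. X i \<omega>) n)"
  unfolding vfrac_def approx_by_iff_approx_set
  by (simp add: LBINT_mem_eq_uncovered_frac)

section \<open>The stopping times\<close>

lemma uncovered_frac_approx_set_antimono:
  "n \<le> m \<Longrightarrow> uncovered_frac (approx_set eps y m) \<le> uncovered_frac (approx_set eps y n)"
  by (intro uncovered_frac_antimono approx_set_mono approx_set_borel)

definition half_covered_first_at :: "real \<Rightarrow> (nat \<Rightarrow> real) \<Rightarrow> nat \<Rightarrow> bool" where
  "half_covered_first_at eps y k \<longleftrightarrow>
     uncovered_frac (approx_set eps y k) < 1/2 \<and> (\<forall>j<k. 1/2 \<le> uncovered_frac (approx_set eps y j))"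

lemma pred_half_covered_first_at [measurable]:
  assumes "k \<le> m"
  shows "Measurable.pred (PiM {1..m} (\<lambda>_. borel)) (\<lambda>y. half_covered_first_at eps y k)"
proof -
  have "Measurable.pred (PiM {1..m} (\<lambda>_. borel)) (\<lambda>y. 1/2 \<le> uncovered_frac (approx_set eps y j))"
    if "j < k" for j
  proof -
    have "j \<le> m"
      using that assms by simp
    then show ?thesis
      by measurable
  qed
  then have "Measurable.pred (PiM {1..m} (\<lambda>_. borel)) (\<lambda>y. \<forall>j\<in>{..<k}. 1/2 \<le> uncovered_frac (approx_set eps y j))"
    by (intro pred_intros_finite) auto
  moreover have "Measurable.pred (PiM {1..m} (\<lambda>_. borel)) (\<lambda>y. uncovered_frac (approx_set eps y k) < 1/2)"
    using assms by measurable
  ultimately have "Measurable.pred (PiM {1..m} (\<lambda>_. borel))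
      (\<lambda>y. uncovered_frac (approx_set eps y k) < 1/2 \<and> (\<forall>j\<in>{..<k}. 1/2 \<le> uncovered_frac (approx_set eps y j)))"
    by (intro pred_intros_logic)
  then show ?thesis
    unfolding half_covered_first_at_def by (simp add: lessThan_def)
qed

lemma half_covered_first_at_restrict:
  assumes "k \<le> m"
  shows "half_covered_first_at eps (restrict y {1..m}) k = half_covered_first_at eps y k"
proof -
  have "approx_set eps (restrict y {1..m}) j = approx_set eps y j" if "j \<le> k" for j
    using that assms by (intro approx_set_cong) auto
  then show ?thesis
    unfolding half_covered_first_at_def by auto
qed

lemma half_covered_first_at_unique:
  "half_covered_first_at eps y k \<Longrightarrow> half_covered_first_at eps y k' \<Longrightarrow> k = k'"
  unfolding half_covered_first_at_def by (metis linorder_neqE_nat not_less)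

lemma half_covered_first_at_imp_le_half:
  "half_covered_first_at eps y k \<Longrightarrow> k \<le> m \<Longrightarrow> uncovered_frac (approx_set eps y m) \<le> 1/2"
  unfolding half_covered_first_at_def using uncovered_frac_approx_set_antimono[of k m eps y] by auto

lemma ex_half_covered_first_at:
  assumes "uncovered_frac (approx_set eps y n) < 1/2"
  shows "\<exists>k\<le>n. half_covered_first_at eps y k"
proof -
  define k where "k = (LEAST j. uncovered_frac (approx_set eps y j) < 1/2)"
  have "half_covered_first_at eps y k"
    unfolding half_covered_first_at_def k_def
    using assms by (auto intro: LeastI dest: not_less_Least)
  moreover have "k \<le> n"
    unfolding k_def using assms by (rule Least_le)
  ultimately show ?thesis
    by blast
qed

lemma tau1_eq_enat_iff: "tau1 eps X \<omega> = enat k \<longleftrightarrow> half_covered_first_at eps (\<lambda>i. X i \<omega>) k"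
proof -
  have crossed: "vfrac eps X j \<omega> > 1/2 \<longleftrightarrow> uncovered_frac (approx_set eps (\<lambda>i. X i \<omega>) j) < 1/2" for j
    by (auto simp: vfrac_eq_uncovered_frac)
  show ?thesis
  proof
    assume "tau1 eps X \<omega> = enat k"
    then have ex: "\<exists>t. vfrac eps X t \<omega> > 1/2" and k: "k = (LEAST t. vfrac eps X t \<omega> > 1/2)"
      unfolding tau1_def by (auto split: if_splits)
    have "vfrac eps X k \<omega> > 1/2"
      unfolding k by (rule LeastI_ex[OF ex])
    moreover have "\<not> vfrac eps X j \<omega> > 1/2" if "j < k" for j
      using not_less_Least that unfolding k by blast
    ultimately show "half_covered_first_at eps (\<lambda>i. X i \<omega>) k"
      unfolding half_covered_first_at_def using crossed by (metis not_less)
  next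
    assume "half_covered_first_at eps (\<lambda>i. X i \<omega>) k"
    then have crossed_k: "vfrac eps X k \<omega> > 1/2" and before: "\<And>j. j < k \<Longrightarrow> \<not> vfrac eps X j \<omega> > 1/2"
      unfolding half_covered_first_at_def using crossed by (metis not_less)+
    then have "(LEAST t. vfrac eps X t \<omega> > 1/2) = k"
      by (intro Least_equality) (blast intro: leI)+
    with crossed_k show "tau1 eps X \<omega> = enat k"
      unfolding tau1_def by auto
  qed
qed

lemma wfrac_eq_uncovered_frac:
  "half_covered_first_at eps (\<lambda>i. X i \<omega>) k
    \<Longrightarrow> wfrac eps X s \<omega> = uncovered_frac (approx_set eps (\<lambda>i. X i \<omega>) (k + s))"
  unfolding wfrac_def by (simp add: tau1_eq_enat_iff[symmetric] vfrac_eq_uncovered_frac)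

lemma tau2_le_enat_iff:
  "tau2 eps X \<omega> \<le> enat t \<longleftrightarrow>
    (\<exists>k. half_covered_first_at eps (\<lambda>i. X i \<omega>) k \<and> uncovered_frac (approx_set eps (\<lambda>i. X i \<omega>) (k + t)) \<le> eps/2)"
  (is "_ \<longleftrightarrow> (\<exists>k. ?first k \<and> ?late k)")
proof
  assume "tau2 eps X \<omega> \<le> enat t"
  then have finite: "tau1 eps X \<omega> \<noteq> \<infinity>" and reached: "\<exists>s. wfrac eps X s \<omega> \<le> eps/2"
    and "(LEAST s. wfrac eps X s \<omega> \<le> eps/2) \<le> t"
    unfolding tau2_def by (auto split: if_splits)
  moreover obtain k where "tau1 eps X \<omega> = enat k"
    using finite by auto
  then have first: "?first k"
    by (simp add: tau1_eq_enat_iff)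
  ultimately obtain s where "s \<le> t" "uncovered_frac (approx_set eps (\<lambda>i. X i \<omega>) (k + s)) \<le> eps/2"
    by (metis LeastI_ex wfrac_eq_uncovered_frac)
  moreover have "uncovered_frac (approx_set eps (\<lambda>i. X i \<omega>) (k + t))
      \<le> uncovered_frac (approx_set eps (\<lambda>i. X i \<omega>) (k + s))"
    using \<open>s \<le> t\<close> by (intro uncovered_frac_approx_set_antimono) simp
  ultimately have "?late k"
    by linarith
  with first show "\<exists>k. ?first k \<and> ?late k"
    by blast
next
  assume "\<exists>k. ?first k \<and> ?late k"
  then obtain k where first: "?first k" and "?late k"
    by blast
  then have "wfrac eps X t \<omega> \<le> eps/2"
    by (simp add: wfrac_eq_uncovered_frac)
  moreover have "tau1 eps X \<omega> \<noteq> \<infinity>"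
    using first tau1_eq_enat_iff by fastforce
  ultimately show "tau2 eps X \<omega> \<le> enat t"
    unfolding tau2_def by (auto intro: Least_le)
qed

section \<open>The probabilistic argument\<close>

lemma set_nn_integral_Markov_inequality:
  fixes f :: "'a \<Rightarrow> real"
  assumes [measurable]: "f \<in> borel_measurable M" "A \<in> sets M" and "0 < c"
  shows "emeasure M {x\<in>A. c \<le> f x} \<le> ennreal (1 / c) * (\<integral>\<^sup>+x\<in>A. f x \<partial>M)"
proof -
  have "1 \<le> ennreal (1 / c) * ennreal y \<longleftrightarrow> c \<le> y" for y
  proof (cases "0 \<le> y")
    case True
    then have "ennreal (1 / c) * ennreal y = ennreal (y / c)"
      using \<open>0 < c\<close> by (simp add: ennreal_mult[symmetric])
    then show ?thesis
      using True \<open>0 < c\<close> by (simp add: ennreal_1[symmetric] ennreal_le_iff del: ennreal_1)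
  qed (use \<open>0 < c\<close> in \<open>simp add: ennreal_neg\<close>)
  then have "{x\<in>A. c \<le> f x} = {x\<in>A. 1 \<le> ennreal (1 / c) * ennreal (f x)}"
    by simp
  then show ?thesis
    by (simp add: nn_integral_Markov_inequality)
qed

locale uniform_subset_sums = prob_space M for M :: "'a measure" +
  fixes X :: "nat \<Rightarrow> 'a \<Rightarrow> real" and eps :: real
  assumes indep: "indep_vars (\<lambda>_. borel) X {1..}"
    and uniform: "\<And>i. 1 \<le> i \<Longrightarrow> distr M borel (X i) = uniform_measure lborel {-1..1}"
    and eps_pos: "0 < eps"
begin

definition prefix :: "nat \<Rightarrow> 'a \<Rightarrow> nat \<Rightarrow> real" where
  "prefix n \<omega> = restrict (\<lambda>i. X i \<omega>) {1..n}"

definition uncovered :: "nat \<Rightarrow> 'a \<Rightarrow> real" where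
  "uncovered n \<omega> = uncovered_frac (approx_set eps (\<lambda>i. X i \<omega>) n)"

lemma X_measurable [measurable]: "1 \<le> i \<Longrightarrow> X i \<in> borel_measurable M"
  using indep unfolding indep_vars_def by auto

lemma prefix_measurable [measurable]: "prefix n \<in> M \<rightarrow>\<^sub>M PiM {1..n} (\<lambda>_. borel)"
  unfolding prefix_def by (intro measurable_restrict X_measurable) auto

definition next_coord :: "nat \<Rightarrow> 'a \<Rightarrow> nat \<Rightarrow> real" where
  "next_coord m \<omega> = restrict (\<lambda>i. X i \<omega>) {Suc m}"

lemma next_coord_measurable [measurable]: "next_coord m \<in> M \<rightarrow>\<^sub>M PiM {Suc m} (\<lambda>_. borel)"
  unfolding next_coord_def by (intro measurable_restrict X_measurable) auto

lemma uncovered_eq_prefix: "k \<le> n \<Longrightarrow> uncovered k \<omega> = uncovered_frac (approx_set eps (prefix n \<omega>) k)"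
  unfolding uncovered_def prefix_def by (intro arg_cong[where f = uncovered_frac] approx_set_cong) auto

lemma borel_measurable_uncovered [measurable]: "uncovered n \<in> borel_measurable M"
proof -
  have "(\<lambda>\<omega>. uncovered_frac (approx_set eps (prefix n \<omega>) n)) \<in> borel_measurable M"
    using measurable_compose[OF prefix_measurable borel_measurable_uncovered_frac_approx_set[OF order.refl]]
    by simp
  then show ?thesis
    by (simp add: uncovered_eq_prefix[OF order.refl, abs_def])
qed

lemma distr_prefix_next_eq:
  "distr M (PiM {1..m} (\<lambda>_. borel) \<Otimes>\<^sub>M PiM {Suc m} (\<lambda>_. borel)) (\<lambda>\<omega>. (prefix m \<omega>, next_coord m \<omega>))
    = distr M (PiM {1..m} (\<lambda>_. borel)) (prefix m) \<Otimes>\<^sub>M distr M (PiM {Suc m} (\<lambda>_. borel)) (next_coord m)"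
proof -
  have "indep_var (PiM {1..m} (\<lambda>_. borel)) (prefix m) (PiM {Suc m} (\<lambda>_. borel)) (next_coord m)"
    unfolding prefix_def next_coord_def by (rule indep_var_restrict[OF indep]) auto
  then show ?thesis
    by (simp add: indep_var_distribution_eq)
qed

lemma nn_integral_next_coord:
  assumes [measurable]: "f \<in> borel_measurable borel"
  shows "(\<integral>\<^sup>+z. f (z (Suc m)) \<partial>distr M (PiM {Suc m} (\<lambda>_. borel)) (next_coord m))
    = (\<integral>\<^sup>+x. f x \<partial>uniform_measure lborel {-1..1})"
proof -
  have "(\<integral>\<^sup>+z. f (z (Suc m)) \<partial>distr M (PiM {Suc m} (\<lambda>_. borel)) (next_coord m))
      = (\<integral>\<^sup>+\<omega>. f (X (Suc m) \<omega>) \<partial>M)"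
    by (subst nn_integral_distr) (auto simp: next_coord_def)
  also have "\<dots> = (\<integral>\<^sup>+x. f x \<partial>distr M borel (X (Suc m)))"
    by (subst nn_integral_distr) auto
  finally show ?thesis
    by (simp add: uniform)
qed

lemma nn_integral_prefix_next:
  assumes [measurable]: "H \<in> borel_measurable (PiM {1..m} (\<lambda>_. borel) \<Otimes>\<^sub>M borel)"
  shows "(\<integral>\<^sup>+\<omega>. H (prefix m \<omega>, X (Suc m) \<omega>) \<partial>M)
    = (\<integral>\<^sup>+y. \<integral>\<^sup>+x. H (y, x) \<partial>uniform_measure lborel {-1..1} \<partial>distr M (PiM {1..m} (\<lambda>_. borel)) (prefix m))"
proof -
  let ?N = "PiM {1..m} (\<lambda>_. borel :: real measure)"
  let ?N1 = "PiM {Suc m} (\<lambda>_. borel :: real measure)"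
  let ?Q = "distr M ?N1 (next_coord m)"
  interpret Q: prob_space ?Q
    by (rule prob_space_distr) simp
  have "(\<lambda>p. (fst p, snd p (Suc m))) \<in> ?N \<Otimes>\<^sub>M ?N1 \<rightarrow>\<^sub>M ?N \<Otimes>\<^sub>M borel"
    by measurable
  from measurable_compose[OF this assms]
  have H_next: "(\<lambda>p. H (fst p, snd p (Suc m))) \<in> borel_measurable (?N \<Otimes>\<^sub>M ?N1)"
    by simp
  then have "(\<integral>\<^sup>+\<omega>. H (prefix m \<omega>, X (Suc m) \<omega>) \<partial>M)
      = (\<integral>\<^sup>+p. H (fst p, snd p (Suc m)) \<partial>distr M (?N \<Otimes>\<^sub>M ?N1) (\<lambda>\<omega>. (prefix m \<omega>, next_coord m \<omega>)))"
    using measurable_Pair[OF prefix_measurable next_coord_measurable]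
    by (subst nn_integral_distr) (auto simp: next_coord_def)
  also have "\<dots> = (\<integral>\<^sup>+y. \<integral>\<^sup>+z. H (y, z (Suc m)) \<partial>?Q \<partial>distr M ?N (prefix m))"
  proof -
    have "(\<lambda>p. H (fst p, snd p (Suc m))) \<in> borel_measurable (distr M ?N (prefix m) \<Otimes>\<^sub>M ?Q)"
      using H_next by (simp cong: measurable_cong_sets sets_pair_measure_cong)
    from Q.nn_integral_fst[OF this] show ?thesis
      unfolding distr_prefix_next_eq by simp
  qed
  also have "\<dots> = (\<integral>\<^sup>+y. \<integral>\<^sup>+x. H (y, x) \<partial>uniform_measure lborel {-1..1} \<partial>distr M ?N (prefix m))"
    by (intro nn_integral_cong nn_integral_next_coord measurable_Pair2[OF assms]) simp
  finally show ?thesis .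
qed

lemma uncovered_Suc_eq:
  "uncovered (Suc m) \<omega> = uncovered_frac (translate_union (approx_set eps (prefix m \<omega>) m) (X (Suc m) \<omega>))"
proof -
  have "approx_set eps (\<lambda>i. X i \<omega>) m = approx_set eps (prefix m \<omega>) m"
    unfolding prefix_def by (intro approx_set_cong) auto
  then show ?thesis
    unfolding uncovered_def approx_set_Suc by simp
qed

lemma nn_integral_uncovered_Suc_le:
  fixes g :: "(nat \<Rightarrow> real) \<Rightarrow> bool"
  assumes [measurable]: "Measurable.pred (PiM {1..m} (\<lambda>_. borel)) g"
    and g_restrict: "\<And>y. g (restrict y {1..m}) = g y"
    and "0 \<le> \<rho>"
    and rate: "\<And>y. g y \<Longrightarrow> (\<integral>\<^sup>+x. uncovered_frac (translate_union (approx_set eps y m) x)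
      \<partial>uniform_measure lborel {-1..1}) \<le> ennreal (\<rho> * uncovered_frac (approx_set eps y m))"
  shows "(\<integral>\<^sup>+\<omega>\<in>{\<omega>\<in>space M. g (\<lambda>i. X i \<omega>)}. uncovered (Suc m) \<omega> \<partial>M)
    \<le> ennreal \<rho> * (\<integral>\<^sup>+\<omega>\<in>{\<omega>\<in>space M. g (\<lambda>i. X i \<omega>)}. uncovered m \<omega> \<partial>M)"
proof -
  let ?D = "distr M (PiM {1..m} (\<lambda>_. borel)) (prefix m)"
  define H where "H p = (if g (fst p) then ennreal (uncovered_frac (translate_union (approx_set eps (fst p) m) (snd p))) else 0)"
    for p
  have g_prefix: "g (prefix m \<omega>) = g (\<lambda>i. X i \<omega>)" for \<omega>
    unfolding prefix_def g_restrict ..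
  have [measurable]: "(\<lambda>y. uncovered_frac (approx_set eps y m)) \<in> borel_measurable (PiM {1..m} (\<lambda>_. borel))"
    by (rule borel_measurable_uncovered_frac_approx_set) simp
  then have G_measurable: "(\<lambda>y. if g y then ennreal (uncovered_frac (approx_set eps y m)) else 0)
      \<in> borel_measurable (PiM {1..m} (\<lambda>_. borel))"
    by measurable
  have "H \<in> borel_measurable (PiM {1..m} (\<lambda>_. borel) \<Otimes>\<^sub>M borel)"
    unfolding H_def using borel_measurable_uncovered_frac_translate_union[of eps m] by measurable
  then have "(\<integral>\<^sup>+\<omega>. H (prefix m \<omega>, X (Suc m) \<omega>) \<partial>M) = (\<integral>\<^sup>+y. \<integral>\<^sup>+x. H (y, x) \<partial>uniform_measure lborel {-1..1} \<partial>?D)"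
    by (rule nn_integral_prefix_next)
  also have "\<dots> \<le> (\<integral>\<^sup>+y. ennreal \<rho> * (if g y then ennreal (uncovered_frac (approx_set eps y m)) else 0) \<partial>?D)"
    using rate \<open>0 \<le> \<rho>\<close> by (intro nn_integral_mono) (simp add: H_def ennreal_mult uncovered_frac_nonneg)
  also have "\<dots> = ennreal \<rho> * (\<integral>\<^sup>+y. (if g y then ennreal (uncovered_frac (approx_set eps y m)) else 0) \<partial>?D)"
    using G_measurable by (intro nn_integral_cmult) simp
  also have "(\<integral>\<^sup>+y. (if g y then ennreal (uncovered_frac (approx_set eps y m)) else 0) \<partial>?D)
      = (\<integral>\<^sup>+\<omega>\<in>{\<omega>\<in>space M. g (\<lambda>i. X i \<omega>)}. uncovered m \<omega> \<partial>M)"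
    using G_measurable
    by (subst nn_integral_distr[OF prefix_measurable])
       (auto simp: g_prefix uncovered_eq_prefix[OF order.refl] indicator_def intro!: nn_integral_cong)
  also have "(\<integral>\<^sup>+\<omega>. H (prefix m \<omega>, X (Suc m) \<omega>) \<partial>M) = (\<integral>\<^sup>+\<omega>\<in>{\<omega>\<in>space M. g (\<lambda>i. X i \<omega>)}. uncovered (Suc m) \<omega> \<partial>M)"
    by (auto simp: H_def g_prefix uncovered_Suc_eq indicator_def intro!: nn_integral_cong)
  finally show ?thesis .
qed

lemma nn_integral_uncovered_le:
  "(\<integral>\<^sup>+\<omega>. uncovered n \<omega> \<partial>M) \<le> ennreal ((1 - min eps 1 / 2) ^ n)"
proof (induction n)
  case 0
  have "(\<integral>\<^sup>+\<omega>. uncovered 0 \<omega> \<partial>M) \<le> (\<integral>\<^sup>+\<omega>. 1 \<partial>M)"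
    by (intro nn_integral_mono) (simp add: uncovered_def uncovered_frac_le_1)
  then show ?case
    by (simp add: emeasure_space_1)
next
  case (Suc n)
  let ?e = "min eps 1"
  have e: "0 < ?e" "?e \<le> 1"
    using eps_pos by auto
  have "(\<integral>\<^sup>+\<omega>\<in>{\<omega>\<in>space M. True}. uncovered (Suc n) \<omega> \<partial>M)
      \<le> ennreal (1 - ?e / 2) * (\<integral>\<^sup>+\<omega>\<in>{\<omega>\<in>space M. True}. uncovered n \<omega> \<partial>M)"
    using e by (intro nn_integral_uncovered_Suc_le nn_integral_uncovered_frac_translate_union_le_centred
        order.trans[OF _ centred_interval_subset_approx_set]) auto
  also have "\<dots> \<le> ennreal (1 - ?e / 2) * ennreal ((1 - ?e / 2) ^ n)"
    using Suc.IH by (intro mult_left_mono) auto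
  finally show ?case
    using e by (simp add: ennreal_mult[symmetric])
qed

lemma pred_half_covered_first_at_X [measurable]:
  "Measurable.pred M (\<lambda>\<omega>. half_covered_first_at eps (\<lambda>i. X i \<omega>) k)"
proof -
  have "Measurable.pred M (\<lambda>\<omega>. half_covered_first_at eps (prefix k \<omega>) k)"
    using measurable_compose[OF prefix_measurable pred_half_covered_first_at[OF order.refl]] by simp
  then show ?thesis
    unfolding prefix_def half_covered_first_at_restrict[OF order.refl] .
qed

definition half_covered_first_event :: "nat \<Rightarrow> 'a set" where
  "half_covered_first_event k = {\<omega>\<in>space M. half_covered_first_at eps (\<lambda>i. X i \<omega>) k}"

lemma sets_half_covered_first_event [measurable]: "half_covered_first_event k \<in> sets M"
  unfolding half_covered_first_event_def by measurable

lemma nn_integral_uncovered_after_half_covered_le: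
  "(\<integral>\<^sup>+\<omega>\<in>half_covered_first_event k. uncovered (k + t) \<omega> \<partial>M)
    \<le> ennreal ((7/8) ^ t) * (\<integral>\<^sup>+\<omega>\<in>half_covered_first_event k. uncovered k \<omega> \<partial>M)"
proof (induction t)
  case (Suc t)
  let ?E = "half_covered_first_event k"
  have "(\<integral>\<^sup>+\<omega>\<in>?E. uncovered (Suc (k + t)) \<omega> \<partial>M) \<le> ennreal (7/8) * (\<integral>\<^sup>+\<omega>\<in>?E. uncovered (k + t) \<omega> \<partial>M)"
    unfolding half_covered_first_event_def using pred_half_covered_first_at[of k "k + t"]
    by (intro nn_integral_uncovered_Suc_le nn_integral_uncovered_frac_translate_union_le_7_8
        half_covered_first_at_restrict half_covered_first_at_imp_le_half[of eps _ k]) auto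
  also have "\<dots> \<le> ennreal (7/8) * (ennreal ((7/8) ^ t) * (\<integral>\<^sup>+\<omega>\<in>?E. uncovered k \<omega> \<partial>M))"
    using Suc.IH by (intro mult_left_mono) auto
  finally show ?case
    by (simp add: ennreal_mult[symmetric] mult.assoc[symmetric])
qed simp

lemma set_nn_integral_uncovered_half_covered_le:
  "(\<integral>\<^sup>+\<omega>\<in>half_covered_first_event k. uncovered k \<omega> \<partial>M)
    \<le> ennreal (1/2) * emeasure M (half_covered_first_event k)"
proof -
  let ?E = "half_covered_first_event k"
  have "(\<integral>\<^sup>+\<omega>\<in>?E. uncovered k \<omega> \<partial>M) \<le> (\<integral>\<^sup>+\<omega>. ennreal (1/2) * indicator ?E \<omega> \<partial>M)"
  proof (intro nn_integral_mono)
    fix \<omega>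
    show "ennreal (uncovered k \<omega>) * indicator ?E \<omega> \<le> ennreal (1/2) * indicator ?E \<omega>"
    proof (cases "\<omega> \<in> ?E")
      case True
      then have "uncovered k \<omega> \<le> 1/2"
        using half_covered_first_at_imp_le_half[of eps _ k k]
        by (simp add: half_covered_first_event_def uncovered_def)
      then have "ennreal (uncovered k \<omega>) \<le> ennreal (1/2)"
        by (rule ennreal_leI)
      with True show ?thesis
        by simp
    qed simp
  qed
  also have "\<dots> = ennreal (1/2) * emeasure M ?E"
    by (intro nn_integral_cmult_indicator) simp
  finally show ?thesis .
qed

lemma prob_late_after_half_covered_le:
  "measure M {\<omega>\<in>half_covered_first_event k. eps/2 < uncovered (k + t) \<omega>}
    \<le> (1/eps) * (7/8)^t * measure M (half_covered_first_event k)"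
proof -
  let ?E = "half_covered_first_event k"
  have "emeasure M {\<omega>\<in>?E. eps/2 < uncovered (k + t) \<omega>} \<le> emeasure M {\<omega>\<in>?E. eps/2 \<le> uncovered (k + t) \<omega>}"
    by (intro emeasure_mono) auto
  also have "\<dots> \<le> ennreal (2/eps) * (\<integral>\<^sup>+\<omega>\<in>?E. uncovered (k + t) \<omega> \<partial>M)"
    using set_nn_integral_Markov_inequality[of "uncovered (k + t)" M ?E "eps/2"] eps_pos by simp
  also have "\<dots> \<le> ennreal (2/eps) * (ennreal ((7/8)^t) * (ennreal (1/2) * emeasure M ?E))"
  proof (rule mult_left_mono)
    have "(\<integral>\<^sup>+\<omega>\<in>?E. uncovered (k + t) \<omega> \<partial>M) \<le> ennreal ((7/8)^t) * (\<integral>\<^sup>+\<omega>\<in>?E. uncovered k \<omega> \<partial>M)"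
      by (rule nn_integral_uncovered_after_half_covered_le)
    also have "\<dots> \<le> ennreal ((7/8)^t) * (ennreal (1/2) * emeasure M ?E)"
      using set_nn_integral_uncovered_half_covered_le by (rule mult_left_mono) simp
    finally show "(\<integral>\<^sup>+\<omega>\<in>?E. uncovered (k + t) \<omega> \<partial>M) \<le> \<dots>" .
  qed simp
  also have "\<dots> = ennreal ((1/eps) * (7/8)^t * measure M ?E)"
    unfolding emeasure_eq_measure using eps_pos by (subst ennreal_mult[symmetric], simp, simp)+ simp
  finally have "ennreal (measure M {\<omega>\<in>?E. eps/2 < uncovered (k + t) \<omega>})
      \<le> ennreal ((1/eps) * (7/8)^t * measure M ?E)"
    by (simp only: emeasure_eq_measure)
  moreover have "0 \<le> (1/eps) * (7/8)^t * measure M ?E"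
    using eps_pos by simp
  ultimately show ?thesis
    by (simp only: ennreal_le_iff)
qed

lemma prob_not_late_after_half_covered_ge:
  "(1 - (1/eps) * (7/8)^t) * measure M (half_covered_first_event k)
    \<le> measure M {\<omega>\<in>half_covered_first_event k. uncovered (k + t) \<omega> \<le> eps/2}"
proof -
  let ?E = "half_covered_first_event k"
  have "measure M ?E = measure M ({\<omega>\<in>?E. uncovered (k + t) \<omega> \<le> eps/2} \<union> {\<omega>\<in>?E. eps/2 < uncovered (k + t) \<omega>})"
    by (intro arg_cong[where f = "measure M"]) auto
  also have "\<dots> = measure M {\<omega>\<in>?E. uncovered (k + t) \<omega> \<le> eps/2} + measure M {\<omega>\<in>?E. eps/2 < uncovered (k + t) \<omega>}"
    by (intro finite_measure_Union) (measurable, auto)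
  finally show ?thesis
    using prob_late_after_half_covered_le[of k t] by (simp add: algebra_simps)
qed

lemma prob_uncovered_lt_half_eq_sum:
  "measure M {\<omega>\<in>space M. uncovered N \<omega> < 1/2} = (\<Sum>k\<le>N. measure M (half_covered_first_event k))"
proof -
  have event_eq: "{\<omega>\<in>space M. uncovered N \<omega> < 1/2} = (\<Union>k\<le>N. half_covered_first_event k)"
  proof (intro equalityI subsetI)
    fix \<omega> assume "\<omega> \<in> {\<omega>\<in>space M. uncovered N \<omega> < 1/2}"
    then show "\<omega> \<in> (\<Union>k\<le>N. half_covered_first_event k)"
      using ex_half_covered_first_at[of eps "\<lambda>i. X i \<omega>" N] by (auto simp: half_covered_first_event_def uncovered_def)
  next
    fix \<omega> assume "\<omega> \<in> (\<Union>k\<le>N. half_covered_first_event k)"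
    then obtain k where "k \<le> N" "\<omega> \<in> space M" "half_covered_first_at eps (\<lambda>i. X i \<omega>) k"
      by (auto simp: half_covered_first_event_def)
    moreover from this have "uncovered_frac (approx_set eps (\<lambda>i. X i \<omega>) k) < 1/2"
      by (simp add: half_covered_first_at_def)
    ultimately show "\<omega> \<in> {\<omega>\<in>space M. uncovered N \<omega> < 1/2}"
      using uncovered_frac_approx_set_antimono[of k N eps "\<lambda>i. X i \<omega>"] by (auto simp: uncovered_def)
  qed
  show ?thesis
    unfolding event_eq using half_covered_first_at_unique
    by (intro finite_measure_finite_Union) (auto simp: disjoint_family_on_def half_covered_first_event_def)
qed

lemma tau2_le_event_eq:
  "{\<omega>\<in>space M. tau2 eps X \<omega> \<le> enat t} = (\<Union>k. {\<omega>\<in>half_covered_first_event k. uncovered (k + t) \<omega> \<le> eps/2})"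
  by (auto simp: tau2_le_enat_iff half_covered_first_event_def uncovered_def)

lemma sum_prob_not_late_le_prob_tau2:
  "(\<Sum>k\<le>N. measure M {\<omega>\<in>half_covered_first_event k. uncovered (k + t) \<omega> \<le> eps/2})
    \<le> measure M {\<omega>\<in>space M. tau2 eps X \<omega> \<le> enat t}"
proof -
  let ?T = "\<lambda>k. {\<omega>\<in>half_covered_first_event k. uncovered (k + t) \<omega> \<le> eps/2}"
  have "disjoint_family_on ?T {..N}"
    using half_covered_first_at_unique by (auto simp: disjoint_family_on_def half_covered_first_event_def)
  then have "(\<Sum>k\<le>N. measure M (?T k)) = measure M (\<Union>k\<le>N. ?T k)"
    by (intro finite_measure_finite_Union[symmetric]) auto
  also have "\<dots> \<le> measure M {\<omega>\<in>space M. tau2 eps X \<omega> \<le> enat t}"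
    unfolding tau2_le_event_eq by (intro finite_measure_mono) auto
  finally show ?thesis .
qed

lemma prob_uncovered_lt_half_tendsto: "(\<lambda>N. measure M {\<omega>\<in>space M. uncovered N \<omega> < 1/2}) \<longlonglongrightarrow> 1"
proof (rule tendsto_sandwich)
  define r where "r = 1 - min eps 1 / 2"
  have r: "0 \<le> r" "r < 1"
    using eps_pos unfolding r_def by auto
  have "measure M {\<omega>\<in>space M. 1/2 \<le> uncovered N \<omega>} \<le> 2 * r ^ N" for N
  proof -
    have "emeasure M {\<omega>\<in>space M. 1/2 \<le> uncovered N \<omega>} \<le> ennreal 2 * (\<integral>\<^sup>+\<omega>. uncovered N \<omega> \<partial>M)"
      using set_nn_integral_Markov_inequality[of "uncovered N" M "space M" "1/2"] by simp
    also have "\<dots> \<le> ennreal 2 * ennreal (r ^ N)"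
      using nn_integral_uncovered_le[of N] unfolding r_def by (intro mult_left_mono) auto
    also have "\<dots> = ennreal (2 * r ^ N)"
      using r by (simp add: ennreal_mult)
    finally show ?thesis
      using r by (simp add: emeasure_eq_measure)
  qed
  moreover have "measure M {\<omega>\<in>space M. uncovered N \<omega> < 1/2} = 1 - measure M {\<omega>\<in>space M. 1/2 \<le> uncovered N \<omega>}" for N
    by (subst prob_compl[symmetric]) (auto intro!: arg_cong[where f = "measure M"])
  ultimately show "\<forall>\<^sub>F N in sequentially. 1 - 2 * r ^ N \<le> measure M {\<omega>\<in>space M. uncovered N \<omega> < 1/2}"
    by simp
  show "(\<lambda>N. 1 - 2 * r ^ N) \<longlonglongrightarrow> 1"
    using r by (auto intro!: tendsto_eq_intros LIMSEQ_power_zero)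
qed auto

lemma prob_tau2_le:
  "1 - (1/eps) * (7/8)^t \<le> measure M {\<omega>\<in>space M. tau2 eps X \<omega> \<le> enat t}"
proof (rule LIMSEQ_le_const2)
  let ?c = "(1/eps) * (7/8)^t"
  show "(\<lambda>N. (1 - ?c) * measure M {\<omega>\<in>space M. uncovered N \<omega> < 1/2}) \<longlonglongrightarrow> 1 - ?c"
    using tendsto_mult_left[OF prob_uncovered_lt_half_tendsto] by simp
  show "\<exists>N0. \<forall>N\<ge>N0. (1 - ?c) * measure M {\<omega>\<in>space M. uncovered N \<omega> < 1/2}
      \<le> measure M {\<omega>\<in>space M. tau2 eps X \<omega> \<le> enat t}"
  proof (intro exI allI impI)
    fix N
    have "(1 - ?c) * measure M {\<omega>\<in>space M. uncovered N \<omega> < 1/2} = (\<Sum>k\<le>N. (1 - ?c) * measure M (half_covered_first_event k))"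
      by (simp only: prob_uncovered_lt_half_eq_sum sum_distrib_left)
    also have "\<dots> \<le> (\<Sum>k\<le>N. measure M {\<omega>\<in>half_covered_first_event k. uncovered (k + t) \<omega> \<le> eps/2})"
      by (intro sum_mono prob_not_late_after_half_covered_ge)
    also have "\<dots> \<le> measure M {\<omega>\<in>space M. tau2 eps X \<omega> \<le> enat t}"
      by (rule sum_prob_not_late_le_prob_tau2)
    finally show "(1 - ?c) * measure M {\<omega>\<in>space M. uncovered N \<omega> < 1/2} \<le> \<dots>" .
  qed
qed

end

theorem lemma6:
  fixes M :: "'a measure" and X :: "nat \<Rightarrow> 'a \<Rightarrow> real" and eps :: real and t :: nat
  assumes "prob_space M"
    and "prob_space.indep_vars M (\<lambda>_. borel) X {1..}"
    and "\<And>i. i \<ge> 1 \<Longrightarrow> distr M borel (X i) = uniform_measure lborel {-1..1}"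
    and "eps > 0"
    and "t > 0"
  shows "measure M {\<omega> \<in> space M. tau2 eps X \<omega> \<le> enat t} \<ge> 1 - (1/eps) * (7/8)^t"
proof -
  interpret uniform_subset_sums M X eps
    using assms by (simp add: uniform_subset_sums_def uniform_subset_sums_axioms_def)
  show ?thesis
    by (rule prob_tau2_le)
qed

end
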